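(* Let $G$ be a flattened grammar with start symbol $S$, and let $\mathrm{CPS}(G)$ be its CPS transformation (with respect to an arbitrary fixed choice of CPS-triggering nonterminals), with start symbol $\hat S$. Then $G$ and $\mathrm{CPS}(G)$ generate the same language, i.e. for every $\lambda\in\Sigma^*$, $S\Rightarrow^*\lambda$ in $G$ if and only if $\hat S\Rightarrow^*\lambda$ in $\mathrm{CPS}(G)$.
   Context: BNF grammars and flattening. A BNF grammar over terminals $\Sigma$ is a list of rules $X\to e$, where $X$ is a nonterminal (called top-level) and $e$ is an expression: a single symbol; a concatenation $e_1\cdots e_n$ ($n\ge 0$, the case $n=0$ being $\varepsilon$); an alternation $e_1\mid\cdots\mid e_n$; an optional $e_1?$; or a repetition $e_1^*$. The procedure $\mathrm{Flatten}(X,e)$ emits context-free productions: (i) if $e=\alpha$ is a single symbol, emit $X\to\alpha$; (ii) if $e=e_1\cdots e_n$, for each $i$ let $\alpha_i=e_i$ if $e_i$ is a single symbol, and otherwise let $\alpha_i$ be a fresh nonterminal and call $\mathrm{Flatten}(\alpha_i,e_i)$; emit $X\to\alpha_1\cdots\alpha_n$; (iii) if $e=e_1\mid\cdots\mid e_n$, call $\mathrm{Flatten}(X,e_i)$ for each $i$; (iv) if $e=e_1?$, call $\mathrm{Flatten}(X,e_1\mid\varepsilon)$; (v) if $e=e_1^*$, let $\alpha$ be fresh, call $\mathrm{Flatten}(\alpha,e_1)$ and emit $X\to\alpha X$ and $X\to\varepsilon$. The flattened grammar $G$ consists of all productions emitted by $\mathrm{Flatten}(X,e)$ over all rules $X\to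 e$; its start symbol $S$ is a top-level nonterminal. CPS transformation. A nonterminal is CPS-eligible if it was created as a fresh symbol during flattening. Fix an arbitrary subset of the CPS-eligible nonterminals, called CPS-triggering (terminals and top-level nonterminals are never CPS-triggering). For every nonterminal $Y$ let $\hat Y$ be a new symbol; for a terminal $\sigma$ set $\hat\sigma=\sigma$. Define mutually recursive procedures. $\mathrm{CPSProd}(X\to\alpha_1\cdots\alpha_i\cdot\alpha_{i+1}\cdots\alpha_r,\ \tau)$, where $\tau$ is a string of symbols: if $i=0$, add the production $\hat X\to\tau$ to $\mathrm{CPS}(G)$; if $i>0$ and $\alpha_i$ is not CPS-triggering, call $\mathrm{CPSProd}(X\to\alpha_1\cdots\alpha_{i-1}\cdot\alpha_i\cdots\alpha_r,\ \hat\alpha_i\tau)$; if $i>0$, $\alpha_i$ is CPS-triggering, $i=r$ and $X=\alpha_r$ (i.e. the dotted production has the form $\alpha\to\gamma\alpha\,\cdot$), call $\mathrm{CPSProd}(X\to\alpha_1\cdots\alpha_{r-1}\cdot\alpha_r,\ \hat\alpha_r)$; otherwise ($\alpha_i$ CPS-triggering, not of that form) call $\mathrm{CPSSym}(\alpha_i,\tau)$ and then $\mathrm{CPSProd}(X\to\alpha_1\cdots\alpha_{i-1}\cdot\alpha_i\cdots\alpha_r,\ \hat\alpha_i)$. $\mathrm{CPSSym}(X,\tau)$: for each production $X\to\eta$ of $G$, call $\mathrm{CPSProd}(X\to\eta\,\cdot,\ \tau)$. The grammar $\mathrm{CPS}(G)$ consists of all productions added when $\mathrm{CPSSym}(X,\varepsilon)$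 is called for every non-CPS-triggering nonterminal $X$; its start symbol is $\hat S$. *)

theory Defs
  imports Main
begin

datatype ('t, 'a) sym = T 't | N 'a

type_synonym ('t, 'a) prod = "'a \<times> ('t, 'a) sym list"

definition derive1 :: "('t, 'a) prod set \<Rightarrow> ('t, 'a) sym list \<Rightarrow> ('t, 'a) sym list \<Rightarrow> bool" where
  "derive1 P u v \<longleftrightarrow> (\<exists>l r A w. u = l @ [N A] @ r \<and> (A, w) \<in> P \<and> v = l @ w @ r)"

definition derives :: "('t, 'a) prod set \<Rightarrow> ('t, 'a) sym list \<Rightarrow> ('t, 'a) sym list \<Rightarrow> bool" where
  "derives P = (derive1 P)\<^sup>*\<^sup>*"

definition nts :: "('t, 'a) prod set \<Rightarrow> 'a set" where
  "nts P = {A. \<exists>(B, w) \<in> P. A = B \<or> N A \<in> set w}"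

datatype ('t, 'n) expr =
    Sym "('t, 'n) sym"
  | Seq "('t, 'n) expr list"
  | Alt "('t, 'n) expr list"
  | Opt "('t, 'n) expr"
  | Star "('t, 'n) expr"

fun is_Sym :: "('t, 'n) expr \<Rightarrow> bool" where
  "is_Sym (Sym _) = True"
| "is_Sym _ = False"

text \<open>A fresh nonterminal is named by the index of the BNF rule and the position
  (path) of the subexpression it was created for; this makes all fresh symbols
  pairwise distinct and distinct from the top-level ones.\<close>
datatype 'n fnt = Top 'n | Fresh nat "nat list"

fun lift_sym :: "('t, 'n) sym \<Rightarrow> ('t, 'n fnt) sym" where
  "lift_sym (T t) = T t"
| "lift_sym (N n) = N (Top n)"

fun seq_sym :: "nat \<Rightarrow> nat list \<Rightarrow> nat \<Rightarrow> ('t, 'n) expr \<Rightarrow> ('t, 'n fnt) sym" where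
  "seq_sym i p k (Sym a) = lift_sym a"
| "seq_sym i p k e = N (Fresh i (p @ [k]))"

text \<open>\<open>emits i p X e r\<close>: the production \<open>r\<close> is emitted by \<open>Flatten(X, e)\<close>, where
  \<open>e\<close> is the subexpression at path \<open>p\<close> of rule number \<open>i\<close>.
  \<open>Flatten(X, e?) = Flatten(X, e | \<epsilon>)\<close> is unfolded directly.\<close>
inductive emits :: "nat \<Rightarrow> nat list \<Rightarrow> 'n fnt \<Rightarrow> ('t, 'n) expr \<Rightarrow> ('t, 'n fnt) prod \<Rightarrow> bool"
  where
  sym: "emits i p X (Sym a) (X, [lift_sym a])"
| seq: "emits i p X (Seq es) (X, map (\<lambda>k. seq_sym i p k (es ! k)) [0..<length es])"
| seq_sub: "\<lbrakk>k < length es; \<not> is_Sym (es ! k);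
             emits i (p @ [k]) (Fresh i (p @ [k])) (es ! k) r\<rbrakk>
           \<Longrightarrow> emits i p X (Seq es) r"
| alt: "\<lbrakk>k < length es; emits i (p @ [k]) X (es ! k) r\<rbrakk> \<Longrightarrow> emits i p X (Alt es) r"
| opt_sub: "emits i (p @ [0]) X e r \<Longrightarrow> emits i p X (Opt e) r"
| opt_eps: "emits i p X (Opt e) (X, [])"
| star_sub: "emits i (p @ [0]) (Fresh i (p @ [0])) e r \<Longrightarrow> emits i p X (Star e) r"
| star_cons: "emits i p X (Star e) (X, [N (Fresh i (p @ [0])), N X])"
| star_nil: "emits i p X (Star e) (X, [])"

definition flatten :: "('n \<times> ('t, 'n) expr) list \<Rightarrow> ('t, 'n fnt) prod set" where
  "flatten rules = {r. \<exists>i < length rules. emits i [] (Top (fst (rules ! i))) (snd (rules ! i)) r}"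

definition cps_eligible :: "('t, 'n fnt) prod set \<Rightarrow> 'n fnt \<Rightarrow> bool" where
  "cps_eligible G X \<longleftrightarrow> (\<exists>i q. X = Fresh i q) \<and> X \<in> nts G"

datatype 'a hat = Hat 'a

fun hat_sym :: "('t, 'a) sym \<Rightarrow> ('t, 'a hat) sym" where
  "hat_sym (T t) = T t"
| "hat_sym (N Y) = N (Hat Y)"

fun trig :: "'a set \<Rightarrow> ('t, 'a) sym \<Rightarrow> bool" where
  "trig Tr (T _) = False"
| "trig Tr (N Y) = (Y \<in> Tr)"

text \<open>The calls made by the procedures.  \<open>cps_prod G Tr X \<eta> i \<tau>\<close> means that
  \<open>CPSProd(X \<rightarrow> \<alpha>\<^sub>1\<dots>\<alpha>\<^sub>i \<cdot> \<alpha>\<^sub>i\<^sub>+\<^sub>1\<dots>\<alpha>\<^sub>r, \<tau>)\<close> is called, where \<open>\<eta> = \<alpha>\<^sub>1\<dots>\<alpha>\<^sub>r\<close>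
  (so \<open>\<alpha>\<^sub>i = \<eta> ! (i - 1)\<close>); \<open>cps_sym G Tr X \<tau>\<close> means that \<open>CPSSym(X, \<tau>)\<close> is called.\<close>
inductive cps_prod :: "('t, 'a) prod set \<Rightarrow> 'a set \<Rightarrow> 'a \<Rightarrow> ('t, 'a) sym list \<Rightarrow> nat
                       \<Rightarrow> ('t, 'a hat) sym list \<Rightarrow> bool"
  and cps_sym :: "('t, 'a) prod set \<Rightarrow> 'a set \<Rightarrow> 'a \<Rightarrow> ('t, 'a hat) sym list \<Rightarrow> bool"
  for G :: "('t, 'a) prod set" and Tr :: "'a set"
  where
  start: "\<lbrakk>X \<in> nts G; X \<notin> Tr\<rbrakk> \<Longrightarrow> cps_sym G Tr X []"
| sym_call: "\<lbrakk>cps_sym G Tr X \<tau>; (X, \<eta>) \<in> G\<rbrakk> \<Longrightarrow> cps_prod G Tr X \<eta> (length \<eta>) \<tau>"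
| nontrig: "\<lbrakk>cps_prod G Tr X \<eta> i \<tau>; 0 < i; \<not> trig Tr (\<eta> ! (i - 1))\<rbrakk>
            \<Longrightarrow> cps_prod G Tr X \<eta> (i - 1) (hat_sym (\<eta> ! (i - 1)) # \<tau>)"
| selfloop: "\<lbrakk>cps_prod G Tr X \<eta> i \<tau>; 0 < i; X \<in> Tr; i = length \<eta>; \<eta> ! (i - 1) = N X\<rbrakk>
            \<Longrightarrow> cps_prod G Tr X \<eta> (i - 1) [N (Hat X)]"
| trig_sym: "\<lbrakk>cps_prod G Tr X \<eta> i \<tau>; 0 < i; \<eta> ! (i - 1) = N Y; Y \<in> Tr;
              \<not> (i = length \<eta> \<and> Y = X)\<rbrakk>
            \<Longrightarrow> cps_sym G Tr Y \<tau>"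
| trig_prod: "\<lbrakk>cps_prod G Tr X \<eta> i \<tau>; 0 < i; \<eta> ! (i - 1) = N Y; Y \<in> Tr;
              \<not> (i = length \<eta> \<and> Y = X)\<rbrakk>
            \<Longrightarrow> cps_prod G Tr X \<eta> (i - 1) [N (Hat Y)]"

text \<open>Productions added (case \<open>i = 0\<close> of CPSProd).\<close>
definition CPS :: "('t, 'a) prod set \<Rightarrow> 'a set \<Rightarrow> ('t, 'a hat) prod set" where
  "CPS G Tr = {(Hat X, \<tau>) | X \<eta> \<tau>. cps_prod G Tr X \<eta> 0 \<tau>}"

end

theory Submission
  imports Defs
begin

text \<open>CPS(G) keeps every nonterminal, hatted, but splits each production of G after its first
  triggering symbol \<open>Y\<close>: the remainder becomes the continuation \<open>\<tau>\<close> that \<open>CPSSym(Y, \<tau>)\<close>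
  appends to the right-hand sides of \<open>Hat Y\<close>.  Derivations of terminal words translate in both
  directions by induction on their size, provided every triggering nonterminal receives a single
  continuation.  In a flattened grammar it does: a fresh nonterminal occurs at exactly one
  position of exactly one production, apart from the tail of its own repetition production
  \<open>\<alpha> \<rightarrow> \<gamma>\<alpha>\<close>, and that production lies strictly closer to the top level.\<close>

section \<open>Sized derivations of terminal words\<close>

text \<open>The size is tracked because the proof of soundness of CPS(G) recurses into the part of a
  derivation produced by a continuation, which is not a subderivation.\<close>
inductive yields :: "('t, 'a) prod set \<Rightarrow> nat \<Rightarrow> ('t, 'a) sym list \<Rightarrow> 't list \<Rightarrow> bool" for P where
  yields_Nil: "yields P 0 [] []"
| yields_T: "yields P n xs w \<Longrightarrow> yields P (Suc n) (T a # xs) (a # w)"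
| yields_N: "(A, \<alpha>) \<in> P \<Longrightarrow> yields P n1 \<alpha> w1 \<Longrightarrow> yields P n2 xs w2
    \<Longrightarrow> yields P (Suc (n1 + n2)) (N A # xs) (w1 @ w2)"

inductive_cases yields_NilE: "yields P n [] w"
inductive_cases yields_TE: "yields P n (T a # xs) w"
inductive_cases yields_NE: "yields P n (N A # xs) w"

lemma yields_append:
  "yields P n1 xs w1 \<Longrightarrow> yields P n2 ys w2 \<Longrightarrow> yields P (n1 + n2) (xs @ ys) (w1 @ w2)"
proof (induction rule: yields.induct)
  case (yields_N A \<alpha> n1 w1 n2' xs w2')
  then have "yields P (Suc (n1 + (n2' + n2))) (N A # xs @ ys) (w1 @ w2' @ w2)"
    by (intro yields.yields_N) auto
  then show ?case by (simp add: add.assoc)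
qed (auto intro: yields.intros)

lemma yields_appendE:
  assumes "yields P n (xs @ ys) w"
  obtains n1 n2 w1 w2 where "n = n1 + n2" "w = w1 @ w2" "yields P n1 xs w1" "yields P n2 ys w2"
proof -
  have "\<exists>n1 n2 w1 w2. n = n1 + n2 \<and> w = w1 @ w2 \<and> yields P n1 xs w1 \<and> yields P n2 ys w2"
    using assms
  proof (induction xs arbitrary: n w)
    case Nil
    then show ?case using yields_Nil by (intro exI[of _ 0] exI[of _ n] exI[of _ "[]"] exI[of _ w]) auto
  next
    case (Cons x xs)
    show ?case
    proof (cases x)
      case (T a)
      with Cons.prems obtain n' w' where "n = Suc n'" "w = a # w'" "yields P n' (xs @ ys) w'"
        by (auto elim: yields_TE)
      moreover from Cons.IH[OF this(3)] obtain m1 m2 v1 v2 where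
        "n' = m1 + m2" "w' = v1 @ v2" "yields P m1 xs v1" "yields P m2 ys v2"
        by blast
      ultimately have "n = Suc m1 + m2" "w = (a # v1) @ v2" "yields P (Suc m1) (x # xs) (a # v1)"
        using T yields.yields_T by auto
      then show ?thesis using \<open>yields P m2 ys v2\<close> by blast
    next
      case (N A)
      with Cons.prems obtain n1 n2 w1 w2 \<alpha> where "n = Suc (n1 + n2)" "w = w1 @ w2"
        "(A, \<alpha>) \<in> P" "yields P n1 \<alpha> w1" "yields P n2 (xs @ ys) w2"
        by (auto elim: yields_NE)
      moreover from Cons.IH[OF this(5)] obtain m1 m2 v1 v2 where
        "n2 = m1 + m2" "w2 = v1 @ v2" "yields P m1 xs v1" "yields P m2 ys v2"
        by blast
      ultimately have "n = Suc (n1 + m1) + m2" "w = (w1 @ v1) @ v2"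
        "yields P (Suc (n1 + m1)) (x # xs) (w1 @ v1)"
        using N yields.yields_N by auto
      then show ?thesis using \<open>yields P m2 ys v2\<close> by blast
    qed
  qed
  then show thesis using that by blast
qed

lemma derive1_append_context: "derive1 P u v \<Longrightarrow> derive1 P (x @ u @ y) (x @ v @ y)"
  unfolding derive1_def by (metis append.assoc)

lemma derives_append_context: "derives P u v \<Longrightarrow> derives P (x @ u @ y) (x @ v @ y)"
  unfolding derives_def
  by (induction rule: rtranclp.induct) (auto intro: rtranclp.rtrancl_into_rtrancl derive1_append_context)

lemma yields_imp_derives: "yields P n \<alpha> w \<Longrightarrow> derives P \<alpha> (map T w)"
proof (induction rule: yields.induct)
  case yields_Nil
  then show ?case by (simp add: derives_def)
next
  case (yields_T n xs w a)
  then show ?case using derives_append_context[of P xs "map T w" "[T a]" "[]"] by simp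
next
  case (yields_N A \<alpha> n1 w1 n2 xs w2)
  have "derive1 P (N A # xs) (\<alpha> @ xs)"
    unfolding derive1_def using yields_N(1) by (metis append_Cons append_Nil)
  moreover have "derives P (\<alpha> @ xs) (map T w1 @ xs)"
    using derives_append_context[OF yields_N(4), of "[]" xs] by simp
  moreover have "derives P (map T w1 @ xs) (map T w1 @ map T w2)"
    using derives_append_context[OF yields_N(5), of "map T w1" "[]"] by simp
  ultimately show ?case unfolding derives_def
    by (simp add: converse_rtranclp_into_rtranclp rtranclp_trans)
qed

lemma yields_map_T: "yields P (length w) (map T w) w"
  by (induction w) (auto intro: yields.intros)

lemma derives_imp_yields: "derives P \<alpha> (map T w) \<Longrightarrow> \<exists>n. yields P n \<alpha> w"
  unfolding derives_def
proof (induction rule: converse_rtranclp_induct)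
  case base
  then show ?case using yields_map_T by blast
next
  case (step y z)
  then obtain n where "yields P n z w" by blast
  from step(1) obtain l r A \<gamma> where y: "y = l @ [N A] @ r" and "(A, \<gamma>) \<in> P" and z: "z = l @ \<gamma> @ r"
    unfolding derive1_def by blast
  from \<open>yields P n z w\<close> z obtain n1 n2 w1 w2 where
    "w = w1 @ w2" "yields P n1 l w1" "yields P n2 (\<gamma> @ r) w2"
    by (auto elim: yields_appendE)
  moreover from \<open>yields P n2 (\<gamma> @ r) w2\<close> obtain m1 m2 v1 v2 where
    "w2 = v1 @ v2" "yields P m1 \<gamma> v1" "yields P m2 r v2"
    by (auto elim: yields_appendE)
  ultimately have "yields P (n1 + Suc (m1 + m2)) (l @ N A # r) (w1 @ v1 @ v2)"
    using yields_append yields.yields_N[OF \<open>(A, \<gamma>) \<in> P\<close>] by blast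
  then show ?case using y \<open>w = w1 @ w2\<close> \<open>w2 = v1 @ v2\<close> by auto
qed

section \<open>The productions of the CPS grammar\<close>

text \<open>\<open>CPSProd(X \<rightarrow> \<eta> \<cdot>, \<tau>)\<close> adds \<open>Hat X \<rightarrow> cps_cont Tr \<eta> \<tau>\<close>: the hatted prefix of \<open>\<eta>\<close> up to and
  including its first triggering symbol, followed by \<open>\<tau>\<close> only if no symbol of \<open>\<eta>\<close> triggers.\<close>
fun cps_cont :: "'a set \<Rightarrow> ('t, 'a) sym list \<Rightarrow> ('t, 'a hat) sym list \<Rightarrow> ('t, 'a hat) sym list" where
  "cps_cont Tr [] \<tau> = \<tau>"
| "cps_cont Tr (a # s) \<tau> = (if trig Tr a then [hat_sym a] else hat_sym a # cps_cont Tr s \<tau>)"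

lemma cps_cont_drop:
  "i < length \<eta> \<Longrightarrow> cps_cont Tr (drop i \<eta>) \<tau> =
    (if trig Tr (\<eta> ! i) then [hat_sym (\<eta> ! i)] else hat_sym (\<eta> ! i) # cps_cont Tr (drop (Suc i) \<eta>) \<tau>)"
  by (simp add: Cons_nth_drop_Suc[symmetric])

lemma cps_prod_imp_cps_cont:
  "cps_prod G Tr X \<eta> i \<tau> \<Longrightarrow>
    \<exists>\<tau>0. cps_sym G Tr X \<tau>0 \<and> (X, \<eta>) \<in> G \<and> i \<le> length \<eta> \<and> \<tau> = cps_cont Tr (drop i \<eta>) \<tau>0"
proof (induction rule: cps_prod_cps_sym.inducts(1)[where ?P2.0 = "\<lambda>_ _. True"])
  case (sym_call X \<tau> \<eta>)
  then show ?case by auto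
next
  case (nontrig X \<eta> i \<tau>)
  then obtain \<tau>0 where h: "cps_sym G Tr X \<tau>0" "(X, \<eta>) \<in> G" "i \<le> length \<eta>"
    "\<tau> = cps_cont Tr (drop i \<eta>) \<tau>0"
    by blast
  obtain j where j: "i = Suc j" using \<open>0 < i\<close> gr0_implies_Suc by blast
  have "cps_cont Tr (drop (i - 1) \<eta>) \<tau>0 = hat_sym (\<eta> ! (i - 1)) # \<tau>"
    using cps_cont_drop[of j \<eta> Tr \<tau>0] h(3,4) \<open>\<not> trig Tr (\<eta> ! (i - 1))\<close> j by simp
  with h show ?case by auto
next
  case (selfloop X \<eta> i \<tau>)
  then obtain \<tau>0 where h: "cps_sym G Tr X \<tau>0" "(X, \<eta>) \<in> G" "i \<le> length \<eta>"
    by blast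
  obtain j where j: "i = Suc j" using \<open>0 < i\<close> gr0_implies_Suc by blast
  have "cps_cont Tr (drop (i - 1) \<eta>) \<tau>0 = [N (Hat X)]"
    using cps_cont_drop[of j \<eta> Tr \<tau>0] h(3) \<open>X \<in> Tr\<close> \<open>\<eta> ! (i - 1) = N X\<close> j by simp
  with h show ?case by auto
next
  case (trig_prod X \<eta> i \<tau> Y)
  then obtain \<tau>0 where h: "cps_sym G Tr X \<tau>0" "(X, \<eta>) \<in> G" "i \<le> length \<eta>"
    by blast
  obtain j where j: "i = Suc j" using \<open>0 < i\<close> gr0_implies_Suc by blast
  have "cps_cont Tr (drop (i - 1) \<eta>) \<tau>0 = [N (Hat Y)]"
    using cps_cont_drop[of j \<eta> Tr \<tau>0] h(3) \<open>Y \<in> Tr\<close> \<open>\<eta> ! (i - 1) = N Y\<close> j by simp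
  with h show ?case by auto
qed simp_all

lemma cps_cont_imp_cps_prod:
  assumes "cps_sym G Tr X \<tau>0" and "(X, \<eta>) \<in> G" and "i \<le> length \<eta>"
  shows "cps_prod G Tr X \<eta> i (cps_cont Tr (drop i \<eta>) \<tau>0)"
  using assms(3)
proof (induction "length \<eta> - i" arbitrary: i)
  case 0
  then show ?case using sym_call[OF assms(1,2)] by simp
next
  case (Suc k)
  then have i: "i < length \<eta>" by simp
  have IH: "cps_prod G Tr X \<eta> (Suc i) (cps_cont Tr (drop (Suc i) \<eta>) \<tau>0)"
    using Suc by simp
  show ?case
  proof (cases "trig Tr (\<eta> ! i)")
    case False
    then show ?thesis using nontrig[OF IH] cps_cont_drop[OF i] by simp
  next
    case True
    then obtain Y where Y: "\<eta> ! i = N Y" "Y \<in> Tr" by (cases "\<eta> ! i") auto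
    show ?thesis
    proof (cases "Suc i = length \<eta> \<and> Y = X")
      case True
      have "cps_prod G Tr X \<eta> (Suc i - 1) [N (Hat X)]"
        by (rule selfloop[OF IH]) (use True Y in \<open>simp_all add: True[THEN conjunct1, symmetric]\<close>)
      then have "cps_prod G Tr X \<eta> i [N (Hat X)]" by simp
      then show ?thesis using cps_cont_drop[OF i] True Y by simp
    next
      case False
      have "cps_prod G Tr X \<eta> (Suc i - 1) [N (Hat Y)]"
        by (rule trig_prod[OF IH _ _ Y(2)]) (use False Y in auto)
      then show ?thesis using cps_cont_drop[OF i] Y by simp
    qed
  qed
qed

lemma mem_CPS_iff:
  "(Hat X, \<gamma>) \<in> CPS G Tr \<longleftrightarrow> (\<exists>\<tau> \<eta>. cps_sym G Tr X \<tau> \<and> (X, \<eta>) \<in> G \<and> \<gamma> = cps_cont Tr \<eta> \<tau>)"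
proof
  assume "(Hat X, \<gamma>) \<in> CPS G Tr"
  then obtain \<eta> where "cps_prod G Tr X \<eta> 0 \<gamma>"
    unfolding CPS_def by blast
  from cps_prod_imp_cps_cont[OF this] show "\<exists>\<tau> \<eta>. cps_sym G Tr X \<tau> \<and> (X, \<eta>) \<in> G \<and> \<gamma> = cps_cont Tr \<eta> \<tau>"
    by auto
next
  assume "\<exists>\<tau> \<eta>. cps_sym G Tr X \<tau> \<and> (X, \<eta>) \<in> G \<and> \<gamma> = cps_cont Tr \<eta> \<tau>"
  then obtain \<tau> \<eta> where "cps_sym G Tr X \<tau>" "(X, \<eta>) \<in> G" "\<gamma> = cps_cont Tr \<eta> \<tau>"
    by blast
  with cps_cont_imp_cps_prod[of G Tr X \<tau> \<eta> 0] show "(Hat X, \<gamma>) \<in> CPS G Tr"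
    unfolding CPS_def by auto
qed

lemma cps_sym_nontrig: "cps_sym G Tr Y \<tau> \<Longrightarrow> Y \<notin> Tr \<Longrightarrow> \<tau> = []"
  by (erule cps_sym.cases) auto

lemma cps_sym_nonterminal: "(X, \<eta>) \<in> G \<Longrightarrow> X \<notin> Tr \<Longrightarrow> cps_sym G Tr X []"
  by (rule start) (auto simp: nts_def)

text \<open>A position \<open>j\<close> of the body of \<open>r\<close> is a call site of \<open>Y\<close> if \<open>Y\<close> occurs there, except for
  the last position of a production \<open>Y \<rightarrow> \<gamma>Y\<close>, which CPSProd does not expand.\<close>
definition call_site :: "'a \<Rightarrow> ('t, 'a) prod \<Rightarrow> nat \<Rightarrow> bool" where
  "call_site Y r j \<longleftrightarrow> j < length (snd r) \<and> snd r ! j = N Y \<and> \<not> (Suc j = length (snd r) \<and> fst r = Y)"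

lemma cps_sym_call_site:
  assumes "cps_sym G Tr X \<tau>0" and "(X, \<eta>) \<in> G" and "j < length \<eta>" and "\<eta> ! j = N Y" and "Y \<in> Tr"
  shows "cps_sym G Tr Y (cps_cont Tr (drop (Suc j) \<eta>) \<tau>0)"
proof (cases "Suc j = length \<eta> \<and> Y = X")
  case True
  then show ?thesis using assms(1) by simp
next
  case False
  have "cps_prod G Tr X \<eta> (Suc j) (cps_cont Tr (drop (Suc j) \<eta>) \<tau>0)"
    using cps_cont_imp_cps_prod[OF assms(1,2), of "Suc j"] assms(3) by simp
  then show ?thesis
    by (rule trig_sym[OF _ _ _ assms(5)]) (use False assms(4) in auto)
qed

lemma cps_sym_trigE:
  assumes "cps_sym G Tr Y \<tau>" and "Y \<in> Tr"
  obtains X \<eta> j \<tau>0 where "(X, \<eta>) \<in> G" "call_site Y (X, \<eta>) j" "cps_sym G Tr X \<tau>0"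
    "\<tau> = cps_cont Tr (drop (Suc j) \<eta>) \<tau>0"
  using assms(1)
proof cases
  case start
  with assms(2) show ?thesis by simp
next
  case (trig_sym X \<eta> i)
  obtain \<tau>0 where X: "cps_sym G Tr X \<tau>0" "(X, \<eta>) \<in> G" "i \<le> length \<eta>"
    and \<tau>: "\<tau> = cps_cont Tr (drop i \<eta>) \<tau>0"
    using cps_prod_imp_cps_cont[OF trig_sym(1)] by blast
  have "call_site Y (X, \<eta>) (i - 1)"
    unfolding call_site_def using trig_sym(2-5) X(3) by auto
  moreover have "\<tau> = cps_cont Tr (drop (Suc (i - 1)) \<eta>) \<tau>0"
    using \<tau> \<open>0 < i\<close> by simp
  ultimately show ?thesis using that X(1,2) by blast
qed

definition unique_continuations :: "('t, 'a) prod set \<Rightarrow> 'a set \<Rightarrow> bool" where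
  "unique_continuations G Tr \<longleftrightarrow> (\<forall>Y \<tau>1 \<tau>2. cps_sym G Tr Y \<tau>1 \<longrightarrow> cps_sym G Tr Y \<tau>2 \<longrightarrow> \<tau>1 = \<tau>2)"

lemma unique_continuationsI:
  fixes rank :: "'a \<Rightarrow> nat"
  assumes call_site_unique: "\<And>Y r1 j1 r2 j2. Y \<in> Tr \<Longrightarrow> r1 \<in> G \<Longrightarrow> call_site Y r1 j1
      \<Longrightarrow> r2 \<in> G \<Longrightarrow> call_site Y r2 j2 \<Longrightarrow> r1 = r2 \<and> j1 = j2"
    and call_site_rank: "\<And>Y r j. Y \<in> Tr \<Longrightarrow> r \<in> G \<Longrightarrow> call_site Y r j \<Longrightarrow> rank (fst r) < rank Y"
  shows "unique_continuations G Tr"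
proof -
  have "\<tau>1 = \<tau>2" if "cps_sym G Tr Y \<tau>1" and "cps_sym G Tr Y \<tau>2" for Y \<tau>1 \<tau>2
    using that
  proof (induction "rank Y" arbitrary: Y \<tau>1 \<tau>2 rule: less_induct)
    case less
    show ?case
    proof (cases "Y \<in> Tr")
      case False
      then show ?thesis using cps_sym_nontrig less.prems by metis
    next
      case True
      obtain X1 \<eta>1 j1 \<sigma>1 where 1: "(X1, \<eta>1) \<in> G" "call_site Y (X1, \<eta>1) j1" "cps_sym G Tr X1 \<sigma>1"
        "\<tau>1 = cps_cont Tr (drop (Suc j1) \<eta>1) \<sigma>1"
        using cps_sym_trigE[OF less.prems(1) True] by blast
      obtain X2 \<eta>2 j2 \<sigma>2 where 2: "(X2, \<eta>2) \<in> G" "call_site Y (X2, \<eta>2) j2" "cps_sym G Tr X2 \<sigma>2"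
        "\<tau>2 = cps_cont Tr (drop (Suc j2) \<eta>2) \<sigma>2"
        using cps_sym_trigE[OF less.prems(2) True] by blast
      have same: "X1 = X2" "\<eta>1 = \<eta>2" "j1 = j2"
        using call_site_unique[OF True 1(1,2) 2(1,2)] by auto
      have "rank X1 < rank Y"
        using call_site_rank[OF True 1(1,2)] by simp
      then have "\<sigma>1 = \<sigma>2"
        using less.hyps 1(3) 2(3) same by blast
      then show ?thesis using 1(4) 2(4) same by simp
    qed
  qed
  then show ?thesis unfolding unique_continuations_def by blast
qed

section \<open>Language equivalence\<close>

lemma drop_eq_Cons_iff: "drop i xs = y # ys \<longleftrightarrow> i < length xs \<and> xs ! i = y \<and> drop (Suc i) xs = ys"
  by (metis Cons_nth_drop_Suc drop_all leI list.distinct(1) list.inject)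

lemma yields_imp_yields_CPS:
  assumes "yields G n (drop i \<eta>) w" and "(X, \<eta>) \<in> G" and "cps_sym G Tr X \<tau>0"
    and "yields (CPS G Tr) m \<tau>0 v"
  shows "\<exists>n'. yields (CPS G Tr) n' (cps_cont Tr (drop i \<eta>) \<tau>0) (w @ v)"
  using assms
proof (induction n "drop i \<eta>" w arbitrary: X \<eta> i \<tau>0 m v rule: yields.induct)
  case yields_Nil
  then show ?case by (metis append_Nil cps_cont.simps(1))
next
  case (yields_T n xs w a)
  then have i: "i < length \<eta>" "\<eta> ! i = T a" "xs = drop (Suc i) \<eta>"
    by (metis drop_eq_Cons_iff)+
  with yields_T.hyps(2) yields_T.prems obtain n' where "yields (CPS G Tr) n' (cps_cont Tr xs \<tau>0) (w @ v)"
    by blast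
  moreover have "cps_cont Tr (drop i \<eta>) \<tau>0 = T a # cps_cont Tr xs \<tau>0"
    using yields_T.hyps(3)[symmetric] by simp
  ultimately show ?case by (metis append_Cons yields.yields_T)
next
  case (yields_N A \<alpha> n1 w1 n2 xs w2)
  then have i: "i < length \<eta>" "\<eta> ! i = N A" "xs = drop (Suc i) \<eta>"
    by (metis drop_eq_Cons_iff)+
  with yields_N.hyps(5) yields_N.prems obtain n' where
    rest: "yields (CPS G Tr) n' (cps_cont Tr xs \<tau>0) (w2 @ v)"
    by blast
  show ?case
  proof (cases "A \<in> Tr")
    case True
    have A: "cps_sym G Tr A (cps_cont Tr xs \<tau>0)"
      using cps_sym_call_site[OF yields_N.prems(2,1) i(1,2) True] i(3) by simp
    from yields_N.hyps(3)[of 0 \<alpha> A, OF _ yields_N.hyps(1) A rest] obtain k where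
      "yields (CPS G Tr) k (cps_cont Tr \<alpha> (cps_cont Tr xs \<tau>0)) (w1 @ w2 @ v)"
      by auto
    from yields.yields_N[OF mem_CPS_iff[THEN iffD2] this yields_Nil] A yields_N.hyps(1)
    show ?thesis using yields_N.hyps(6)[symmetric] True by auto
  next
    case False
    have A: "cps_sym G Tr A []" using cps_sym_nonterminal[OF yields_N.hyps(1) False] .
    from yields_N.hyps(3)[of 0 \<alpha> A, OF _ yields_N.hyps(1) A yields_Nil] obtain k where
      "yields (CPS G Tr) k (cps_cont Tr \<alpha> []) w1"
      by auto
    from yields.yields_N[OF mem_CPS_iff[THEN iffD2] this rest] A yields_N.hyps(1)
    show ?thesis using yields_N.hyps(6)[symmetric] False by auto
  qed
qed

lemma yields_CPS_NE:
  assumes "yields (CPS G Tr) n (N (Hat B) # xs) u"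
  obtains n1 n2 u1 u2 \<tau> \<beta> where "n = Suc (n1 + n2)" "u = u1 @ u2" "cps_sym G Tr B \<tau>" "(B, \<beta>) \<in> G"
    "yields (CPS G Tr) n1 (cps_cont Tr \<beta> \<tau>) u1" "yields (CPS G Tr) n2 xs u2"
  using assms by (auto elim!: yields_NE simp: mem_CPS_iff)

lemma yields_CPS_imp_yields:
  assumes unique: "unique_continuations G Tr"
    and "yields (CPS G Tr) n (cps_cont Tr (drop i \<eta>) \<tau>0) u" and "(X, \<eta>) \<in> G" and "cps_sym G Tr X \<tau>0"
  shows "\<exists>w v m. u = w @ v \<and> (\<exists>k. yields G k (drop i \<eta>) w) \<and> yields (CPS G Tr) m \<tau>0 v \<and> m \<le> n"
  using assms(2-4)
proof (induction n arbitrary: u X \<eta> \<tau>0 i rule: less_induct)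
  case (less n)
  show ?case
  proof (cases "i < length \<eta>")
    case False
    then show ?thesis using less.prems yields_Nil
      by (intro exI[of _ "[]"] exI[of _ u] exI[of _ n]) auto
  next
    case i: True
    have \<eta>: "drop i \<eta> = \<eta> ! i # drop (Suc i) \<eta>"
      using i by (simp add: drop_eq_Cons_iff)
    note cont = cps_cont_drop[OF i, of Tr \<tau>0]
    show ?thesis
    proof (cases "\<eta> ! i")
      case (T t)
      with less.prems(1) cont obtain n' u' where n: "n = Suc n'" and "u = t # u'"
        and "yields (CPS G Tr) n' (cps_cont Tr (drop (Suc i) \<eta>) \<tau>0) u'"
        by (auto elim: yields_TE)
      with less.IH[of n'] less.prems(2,3) obtain w v m k where
        "u' = w @ v" "yields G k (drop (Suc i) \<eta>) w" "yields (CPS G Tr) m \<tau>0 v" "m \<le> n'"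
        by blast
      moreover have "yields G (Suc k) (drop i \<eta>) (t # w)"
        using \<eta> T yields.yields_T[OF calculation(2)] by simp
      ultimately show ?thesis using n \<open>u = t # u'\<close>
        by (intro exI[of _ "t # w"] exI[of _ v] exI[of _ m]) auto
    next
      case (N B)
      have "yields (CPS G Tr) n (N (Hat B) # (if B \<in> Tr then [] else cps_cont Tr (drop (Suc i) \<eta>) \<tau>0)) u"
        using less.prems(1) cont N by (cases "B \<in> Tr") auto
      then obtain n1 n2 u1 u2 \<tau> \<beta> where n: "n = Suc (n1 + n2)" and "u = u1 @ u2"
        and B: "cps_sym G Tr B \<tau>" "(B, \<beta>) \<in> G" and \<beta>: "yields (CPS G Tr) n1 (cps_cont Tr \<beta> \<tau>) u1"
        and rest: "yields (CPS G Tr) n2 (if B \<in> Tr then [] else cps_cont Tr (drop (Suc i) \<eta>) \<tau>0) u2"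
        by (rule yields_CPS_NE)
      from less.IH[of n1 0 \<beta> \<tau> u1 B] n B \<beta> obtain w1 v1 m1 k1 where
        "u1 = w1 @ v1" and "yields G k1 \<beta> w1" and v1: "yields (CPS G Tr) m1 \<tau> v1" "m1 \<le> n1"
        by auto
      text \<open>Whether or not \<open>B\<close> triggers, the rest of \<open>\<eta>\<close> followed by \<open>\<tau>0\<close> yields \<open>v1 @ u2\<close>:
        either \<open>\<tau>\<close> is empty, or it is that rest because continuations are unique.\<close>
      have "yields (CPS G Tr) (m1 + n2) (cps_cont Tr (drop (Suc i) \<eta>) \<tau>0) (v1 @ u2)"
      proof (cases "B \<in> Tr")
        case False
        then show ?thesis using cps_sym_nontrig[OF B(1)] v1(1) rest by (auto elim: yields_NilE)
      next
        case True
        then have "\<tau> = cps_cont Tr (drop (Suc i) \<eta>) \<tau>0"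
          using unique B(1) cps_sym_call_site[OF less.prems(3,2) i N True]
          unfolding unique_continuations_def by blast
        then show ?thesis using True v1(1) rest by (auto elim: yields_NilE)
      qed
      with n v1(2) less.IH[of "m1 + n2" "Suc i" \<eta> \<tau>0 "v1 @ u2", OF _ _ less.prems(2,3)]
      obtain w2 v m k2 where
        "v1 @ u2 = w2 @ v" "yields G k2 (drop (Suc i) \<eta>) w2" "yields (CPS G Tr) m \<tau>0 v" "m \<le> m1 + n2"
        by auto
      moreover have "yields G (Suc (k1 + k2)) (drop i \<eta>) (w1 @ w2)"
        using \<eta> N yields.yields_N[OF B(2) \<open>yields G k1 \<beta> w1\<close> calculation(2)] by simp
      ultimately show ?thesis using \<open>u = u1 @ u2\<close> \<open>u1 = w1 @ v1\<close> n v1(2)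
        by (intro exI[of _ "w1 @ w2"] exI[of _ v] exI[of _ m]) auto
    qed
  qed
qed

theorem CPS_derives_iff:
  assumes unique: "unique_continuations G Tr"
    and "S \<notin> Tr"
  shows "derives G [N S] (map T w) \<longleftrightarrow> derives (CPS G Tr) [N (Hat S)] (map T w)"
proof
  assume "derives G [N S] (map T w)"
  then obtain n where "yields G n [N S] w"
    by (blast dest: derives_imp_yields)
  then obtain n1 \<alpha> where S: "(S, \<alpha>) \<in> G" and "yields G n1 \<alpha> w"
    by (auto elim!: yields_NE yields_NilE)
  have S': "cps_sym G Tr S []"
    using cps_sym_nonterminal[OF S \<open>S \<notin> Tr\<close>] .
  obtain k where "yields (CPS G Tr) k (cps_cont Tr (drop 0 \<alpha>) []) (w @ [])"
    using yields_imp_yields_CPS[of G n1 0 \<alpha> w S Tr "[]" 0 "[]"] \<open>yields G n1 \<alpha> w\<close> S S' yields_Nil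
    by auto
  moreover have "(Hat S, cps_cont Tr \<alpha> []) \<in> CPS G Tr"
    unfolding mem_CPS_iff using S S' by blast
  ultimately have "yields (CPS G Tr) (Suc (k + 0)) [N (Hat S)] (w @ [])"
    using yields.yields_N yields_Nil by fastforce
  then show "derives (CPS G Tr) [N (Hat S)] (map T w)"
    using yields_imp_derives by fastforce
next
  assume "derives (CPS G Tr) [N (Hat S)] (map T w)"
  then obtain n where "yields (CPS G Tr) n [N (Hat S)] w"
    by (blast dest: derives_imp_yields)
  then obtain n1 n2 w1 w2 \<tau> \<alpha> where "w = w1 @ w2" and S: "cps_sym G Tr S \<tau>" "(S, \<alpha>) \<in> G"
    and "yields (CPS G Tr) n1 (cps_cont Tr (drop 0 \<alpha>) \<tau>) w1" and "yields (CPS G Tr) n2 [] w2"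
    by (auto elim: yields_CPS_NE)
  moreover have "\<tau> = []"
    using cps_sym_nontrig[OF S(1) \<open>S \<notin> Tr\<close>] .
  ultimately obtain k where "yields G k \<alpha> w"
    using yields_CPS_imp_yields[of G Tr n1 0 \<alpha> \<tau> w1 S, OF unique _ S(2,1)]
    by (auto elim!: yields_NilE)
  then have "yields G (Suc (k + 0)) [N S] (w @ [])"
    using yields.yields_N[OF S(2) _ yields_Nil] by blast
  then show "derives G [N S] (map T w)"
    using yields_imp_derives by fastforce
qed

section \<open>Call sites in flattened grammars\<close>

fun fresh_depth :: "'n fnt \<Rightarrow> nat" where
  "fresh_depth (Top _) = 0"
| "fresh_depth (Fresh _ q) = Suc (length q)"

lemma seq_sym_eq_Fresh: "seq_sym i p k e = N (Fresh i' q) \<Longrightarrow> i' = i \<and> q = p @ [k] \<and> \<not> is_Sym e"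
  by (cases e) (auto elim: lift_sym.elims)

lemma lift_sym_neq_Fresh: "lift_sym a \<noteq> N (Fresh i q)"
  by (cases a) auto

inductive_cases emits_SeqE: "emits i p X (Seq es) r"
inductive_cases emits_AltE: "emits i p X (Alt es) r"
inductive_cases emits_OptE: "emits i p X (Opt e) r"
inductive_cases emits_StarE: "emits i p X (Star e) r"

text \<open>The hypothesis on \<open>X\<close> holds for the top-level call and for every recursive one, where
  \<open>X\<close> is the top-level nonterminal or the fresh nonterminal created at path \<open>p\<close>.\<close>
lemma emits_call_site_Fresh:
  assumes "emits i p X e r" and "fresh_depth X \<le> Suc (length p)" and "call_site (Fresh i' q) r j"
  shows "i' = i \<and> (\<exists>k q'. q = p @ k # q') \<and> fresh_depth (fst r) < fresh_depth (Fresh i' q)"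
  using assms
proof (induction arbitrary: j rule: emits.induct)
  case (sym i p X a)
  then have "lift_sym a = N (Fresh i' q)" by (auto simp: call_site_def)
  then show ?case using lift_sym_neq_Fresh by blast
next
  case (seq i p X es)
  then have "seq_sym i p j (es ! j) = N (Fresh i' q)" by (auto simp: call_site_def)
  from seq_sym_eq_Fresh[OF this] seq.prems(1) show ?case by auto
next
  case (seq_sub k es i p r X)
  from seq_sub.IH[OF _ seq_sub.prems(2)] show ?case by auto
next
  case (alt k es i p X r)
  from alt.IH[OF _ alt.prems(2)] alt.prems(1) show ?case by auto
next
  case (opt_sub i p X e r)
  from opt_sub.IH[OF _ opt_sub.prems(2)] opt_sub.prems(1) show ?case by auto
next
  case (star_sub i p e r X)
  from star_sub.IH[OF _ star_sub.prems(2)] show ?case by auto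
next
  case (star_cons i p X e)
  then show ?case by (cases j) (auto simp: call_site_def)
qed (auto simp: call_site_def)

lemma emits_Seq_cases:
  "emits i p X (Seq es) r \<Longrightarrow> r = (X, map (\<lambda>k. seq_sym i p k (es ! k)) [0..<length es])
    \<or> (\<exists>k < length es. emits i (p @ [k]) (Fresh i (p @ [k])) (es ! k) r)"
  by (erule emits_SeqE) auto

lemma emits_Alt_cases: "emits i p X (Alt es) r \<Longrightarrow> \<exists>k < length es. emits i (p @ [k]) X (es ! k) r"
  by (erule emits_AltE) auto

lemma emits_Opt_cases: "emits i p X (Opt e) r \<Longrightarrow> r = (X, []) \<or> emits i (p @ [0]) X e r"
  by (erule emits_OptE) auto

lemma emits_Star_cases:
  "emits i p X (Star e) r \<Longrightarrow> r = (X, []) \<or> r = (X, [N (Fresh i (p @ [0])), N X])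
    \<or> emits i (p @ [0]) (Fresh i (p @ [0])) e r"
  by (erule emits_StarE) auto

lemma emits_call_site_Fresh_unique:
  assumes "emits i p X e r1" and "emits i p X e r2" and "fresh_depth X \<le> Suc (length p)"
    and "call_site (Fresh i q) r1 j1" and "call_site (Fresh i q) r2 j2"
  shows "r1 = r2 \<and> j1 = j2"
  using assms
proof (induction arbitrary: r2 j1 j2 rule: emits.induct)
  case (sym i p X a)
  then have "lift_sym a = N (Fresh i q)" by (auto simp: call_site_def)
  then show ?case using lift_sym_neq_Fresh by blast
next
  case (seq i p X es)
  then have "seq_sym i p j1 (es ! j1) = N (Fresh i q)" by (auto simp: call_site_def)
  then have q: "q = p @ [j1]" using seq_sym_eq_Fresh by blast
  from emits_Seq_cases[OF seq.prems(1)] show ?case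
  proof
    assume r2: "r2 = (X, map (\<lambda>k. seq_sym i p k (es ! k)) [0..<length es])"
    with seq.prems(4) have "seq_sym i p j2 (es ! j2) = N (Fresh i q)" by (auto simp: call_site_def)
    from seq_sym_eq_Fresh[OF this] q r2 show ?thesis by simp
  next
    assume "\<exists>k < length es. emits i (p @ [k]) (Fresh i (p @ [k])) (es ! k) r2"
    then obtain k where "emits i (p @ [k]) (Fresh i (p @ [k])) (es ! k) r2" by blast
    from emits_call_site_Fresh[OF this _ seq.prems(4)] q show ?thesis by auto
  qed
next
  case (seq_sub k es i p r X)
  obtain k1 q1 where q: "q = (p @ [k]) @ k1 # q1"
    using emits_call_site_Fresh[OF seq_sub.hyps(3) _ seq_sub.prems(3)] by auto
  from emits_Seq_cases[OF seq_sub.prems(1)] show ?case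
  proof
    assume "r2 = (X, map (\<lambda>k. seq_sym i p k (es ! k)) [0..<length es])"
    with seq_sub.prems(4) have "seq_sym i p j2 (es ! j2) = N (Fresh i q)" by (auto simp: call_site_def)
    then show ?thesis using seq_sym_eq_Fresh q by fastforce
  next
    assume "\<exists>k < length es. emits i (p @ [k]) (Fresh i (p @ [k])) (es ! k) r2"
    then obtain k' where k': "emits i (p @ [k']) (Fresh i (p @ [k'])) (es ! k') r2" by blast
    obtain k2 q2 where "q = (p @ [k']) @ k2 # q2"
      using emits_call_site_Fresh[OF k' _ seq_sub.prems(4)] by auto
    with q k' seq_sub.IH[of r2 j1 j2] seq_sub.prems show ?thesis by simp
  qed
next
  case (alt k es i p X r)
  obtain k1 q1 where q: "q = (p @ [k]) @ k1 # q1"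
    using emits_call_site_Fresh[OF alt.hyps(2) _ alt.prems(3)] alt.prems(2) by auto
  obtain k' where k': "emits i (p @ [k']) X (es ! k') r2"
    using emits_Alt_cases[OF alt.prems(1)] by blast
  obtain k2 q2 where "q = (p @ [k']) @ k2 # q2"
    using emits_call_site_Fresh[OF k' _ alt.prems(4)] alt.prems(2) by auto
  with q k' alt.IH[of r2 j1 j2] alt.prems show ?case by simp
next
  case (opt_sub i p X e r)
  from emits_Opt_cases[OF opt_sub.prems(1)] show ?case
  proof
    assume "r2 = (X, [])"
    with opt_sub.prems(4) show ?thesis by (simp add: call_site_def)
  next
    assume "emits i (p @ [0]) X e r2"
    with opt_sub.IH[of r2 j1 j2] opt_sub.prems show ?thesis by simp
  qed
next
  case (star_sub i p e r X)
  obtain k1 q1 where q: "q = (p @ [0]) @ k1 # q1"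
    using emits_call_site_Fresh[OF star_sub.hyps(1) _ star_sub.prems(3)] by auto
  from emits_Star_cases[OF star_sub.prems(1)] consider "r2 = (X, [])"
    | "r2 = (X, [N (Fresh i (p @ [0])), N X])" | "emits i (p @ [0]) (Fresh i (p @ [0])) e r2"
    by blast
  then show ?case
  proof cases
    case 1
    with star_sub.prems(4) show ?thesis by (simp add: call_site_def)
  next
    case 2
    with star_sub.prems(4) q show ?thesis by (cases j2) (auto simp: call_site_def)
  next
    case 3
    with star_sub.IH[of r2 j1 j2] star_sub.prems show ?thesis by simp
  qed
next
  case (star_cons i p X e)
  then have j1: "j1 = 0" "q = p @ [0]" by (cases j1; auto simp: call_site_def)+
  from emits_Star_cases[OF star_cons.prems(1)] consider "r2 = (X, [])"
    | "r2 = (X, [N (Fresh i (p @ [0])), N X])" | "emits i (p @ [0]) (Fresh i (p @ [0])) e r2"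
    by blast
  then show ?case
  proof cases
    case 1
    with star_cons.prems(4) show ?thesis by (simp add: call_site_def)
  next
    case 2
    with star_cons.prems(4) j1 show ?thesis by (cases j2) (auto simp: call_site_def)
  next
    case 3
    from emits_call_site_Fresh[OF 3 _ star_cons.prems(4)] j1 show ?thesis by auto
  qed
qed (auto simp: call_site_def)

lemma flatten_call_site_Fresh:
  assumes "r \<in> flatten rules" and "call_site (Fresh i q) r j"
  shows "i < length rules \<and> emits i [] (Top (fst (rules ! i))) (snd (rules ! i)) r
    \<and> fresh_depth (fst r) < fresh_depth (Fresh i q)"
proof -
  obtain i0 where "i0 < length rules" and i0: "emits i0 [] (Top (fst (rules ! i0))) (snd (rules ! i0)) r"
    using assms(1) unfolding flatten_def by auto
  with emits_call_site_Fresh[OF i0 _ assms(2)] show ?thesis by auto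
qed

lemma flatten_call_site_Fresh_unique:
  assumes "r1 \<in> flatten rules" "call_site (Fresh i q) r1 j1"
    and "r2 \<in> flatten rules" "call_site (Fresh i q) r2 j2"
  shows "r1 = r2 \<and> j1 = j2"
  using emits_call_site_Fresh_unique[of i "[]" _ _ r1 r2 q j1 j2]
    flatten_call_site_Fresh[OF assms(1,2)] flatten_call_site_Fresh[OF assms(3,4)] assms(2,4)
  by auto

lemma unique_continuations_flatten:
  assumes "\<forall>X \<in> Tr. \<exists>i q. X = Fresh i q"
  shows "unique_continuations (flatten rules) Tr"
proof (rule unique_continuationsI[where rank = fresh_depth])
  fix Y r1 j1 r2 j2
  assume "Y \<in> Tr" "r1 \<in> flatten rules" "call_site Y r1 j1" "r2 \<in> flatten rules" "call_site Y r2 j2"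
  moreover obtain i q where "Y = Fresh i q"
    using assms \<open>Y \<in> Tr\<close> by blast
  ultimately show "r1 = r2 \<and> j1 = j2"
    using flatten_call_site_Fresh_unique by blast
next
  fix Y r j
  assume "Y \<in> Tr" "r \<in> flatten rules" "call_site Y r j"
  moreover obtain i q where "Y = Fresh i q"
    using assms \<open>Y \<in> Tr\<close> by blast
  ultimately show "fresh_depth (fst r) < fresh_depth Y"
    using flatten_call_site_Fresh by blast
qed

theorem mainTheorem3:
  fixes rules :: "('n \<times> ('t, 'n) expr) list"
    and Tr :: "'n fnt set"
    and s :: 'n
  assumes "\<forall>X \<in> Tr. cps_eligible (flatten rules) X"
  shows "\<forall>w :: 't list.
           derives (flatten rules) [N (Top s)] (map T w)
       \<longleftrightarrow> derives (CPS (flatten rules) Tr) [N (Hat (Top s))] (map T w)"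
proof
  fix w :: "'t list"
  have fresh: "\<forall>X \<in> Tr. \<exists>i q. X = Fresh i q"
    using assms unfolding cps_eligible_def by blast
  then have "Top s \<notin> Tr" by auto
  with CPS_derives_iff[OF unique_continuations_flatten[OF fresh]]
  show "derives (flatten rules) [N (Top s)] (map T w)
      \<longleftrightarrow> derives (CPS (flatten rules) Tr) [N (Hat (Top s))] (map T w)" .
qed

end
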